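(* Let $S$ be an optimal $n$-town placed in normalized position. If $i\ge0$ and $S$ contains the points $(i,c_i^+)$ and $(i,c_i^-)$, then every grid point of the rectangle $[-i,i]\times[c_i^-,c_i^+]$ belongs to $S$. Similarly, if $i\ge1$ and $S$ contains the points $(-i,c_{-i}^+)$ and $(-i,c_{-i}^-)$, then every grid point of the rectangle $[-i,i-1]\times[c_{-i}^-,c_{-i}^+]$ belongs to $S$.
   Context: An $n$-town is a set $S\subset\mathbb{Z}\times\mathbb{Z}$ of exactly $n$ distinct grid points; its cost is $c(S)=\frac12\sum_{s\in S}\sum_{t\in S}\|s-t\|_1$ (Manhattan distance), and it is optimal if its cost is minimum among all $n$-towns. Rows $R_i=\{(x,i)\in S\}$ and columns $C_i=\{(i,y)\in S\}$; the center of a nonempty row (column) is the midpoint between its extreme points. $S$ is in normalized position if the centers of all rows of odd cardinality lie on the $y$-axis, the centers of all rows of even cardinality lie on the line $x=-\frac12$, the centers of all columns of odd cardinality lie on the $x$-axis, and the centers of all columns of even cardinality lie on the line $y=-\frac12$. For a nonempty column $C_i$, $c_i^+$ and $c_i^-$ denote the $y$-coordinates of its topmost and bottommost points. *)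

theory Defs
  imports Complex_Main
begin

type_synonym point = "int \<times> int"

definition is_town :: "nat \<Rightarrow> point set \<Rightarrow> bool" where
  "is_town n S \<longleftrightarrow> finite S \<and> card S = n"

definition manh :: "point \<Rightarrow> point \<Rightarrow> int" where
  "manh s t = \<bar>fst s - fst t\<bar> + \<bar>snd s - snd t\<bar>"

definition cost :: "point set \<Rightarrow> real" where
  "cost S = (1/2) * (\<Sum>s\<in>S. \<Sum>t\<in>S. real_of_int (manh s t))"

definition optimal_town :: "nat \<Rightarrow> point set \<Rightarrow> bool" where
  "optimal_town n S \<longleftrightarrow> is_town n S \<and> (\<forall>T. is_town n T \<longrightarrow> cost S \<le> cost T)"

definition row :: "point set \<Rightarrow> int \<Rightarrow> point set" where
  "row S i = {p \<in> S. snd p = i}"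

definition col :: "point set \<Rightarrow> int \<Rightarrow> point set" where
  "col S i = {p \<in> S. fst p = i}"

definition row_center :: "point set \<Rightarrow> int \<Rightarrow> real" where
  "row_center S i = (real_of_int (Min (fst ` row S i)) + real_of_int (Max (fst ` row S i))) / 2"

definition col_center :: "point set \<Rightarrow> int \<Rightarrow> real" where
  "col_center S i = (real_of_int (Min (snd ` col S i)) + real_of_int (Max (snd ` col S i))) / 2"

definition normalized :: "point set \<Rightarrow> bool" where
  "normalized S \<longleftrightarrow>
     (\<forall>i. row S i \<noteq> {} \<longrightarrow>
        (odd (card (row S i)) \<longrightarrow> row_center S i = 0) \<and>
        (even (card (row S i)) \<longrightarrow> row_center S i = -1/2)) \<and>
     (\<forall>i. col S i \<noteq> {} \<longrightarrow>
        (odd (card (col S i)) \<longrightarrow> col_center S i = 0) \<and>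
        (even (card (col S i)) \<longrightarrow> col_center S i = -1/2))"

definition cplus :: "point set \<Rightarrow> int \<Rightarrow> int" where
  "cplus S i = Max (snd ` col S i)"

definition cminus :: "point set \<Rightarrow> int \<Rightarrow> int" where
  "cminus S i = Min (snd ` col S i)"

end

theory Submission
  imports Defs
begin

text \<open>
  Replacing one point p of an optimal town by a point q outside it cannot decrease the cost,
  so the sum of distances from p to the rest of the town is at most that from q. If q lies
  strictly inside a segment between two town points, a positive combination of these two
  exchange inequalities contradicts the convexity of the Manhattan norm along that segment.
  Hence optimal towns contain every lattice point between two of their points; in
  particular columns and rows are intervals. The column through i then spans
  [c_i^-, c_i^+], and in normalized position each row through (i, y) has its extremes lo, hi
  with lo + hi \<in> {-1, 0}, so it contains [-i, i], resp. [-i, i-1] when the column is at -i.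
\<close>

lemma manh_sym: "manh s t = manh t s"
  unfolding manh_def by simp

lemma manh_self [simp]: "manh s s = 0"
  unfolding manh_def by simp

lemma cost_insert:
  assumes "finite A" "q \<notin> A"
  shows "cost (insert q A) = cost A + (\<Sum>t\<in>A. real_of_int (manh q t))"
proof -
  have "(\<Sum>s\<in>insert q A. \<Sum>t\<in>insert q A. real_of_int (manh s t))
      = (\<Sum>t\<in>A. real_of_int (manh q t)) + (\<Sum>s\<in>A. real_of_int (manh q s) + (\<Sum>t\<in>A. real_of_int (manh s t)))"
    using assms by (simp add: manh_sym)
  also have "\<dots> = 2 * (\<Sum>t\<in>A. real_of_int (manh q t)) + (\<Sum>s\<in>A. \<Sum>t\<in>A. real_of_int (manh s t))"
    by (simp add: sum.distrib)
  finally show ?thesis unfolding cost_def by simp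
qed

lemma optimal_town_exchange:
  assumes opt: "optimal_town n S" and "p \<in> S" "q \<notin> S"
  shows "(\<Sum>t\<in>S - {p}. manh p t) \<le> (\<Sum>t\<in>S - {p}. manh q t)"
proof -
  define A where "A = S - {p}"
  have town: "finite S" "card S = n" using opt unfolding optimal_town_def is_town_def by auto
  have A: "finite A" "p \<notin> A" "q \<notin> A" "S = insert p A" using assms town(1) unfolding A_def by auto
  have "is_town n (insert q A)"
    unfolding is_town_def using A town by (simp add: card_insert_if)
  hence "cost (insert p A) \<le> cost (insert q A)" using opt A(4) unfolding optimal_town_def by auto
  hence "real_of_int (\<Sum>t\<in>A. manh p t) \<le> real_of_int (\<Sum>t\<in>A. manh q t)"
    using cost_insert[OF A(1,2)] cost_insert[OF A(1,3)] by simp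
  thus ?thesis unfolding A_def by linarith
qed

lemma optimal_town_weighted_exchange:
  assumes opt: "optimal_town n S" and p1: "p1 \<in> S" and p2: "p2 \<in> S" and "p1 \<noteq> p2"
    and q: "q \<notin> S" and "\<alpha> > 0" and "\<beta> > 0"
    and dominated: "\<And>t. (\<alpha> + \<beta>) * manh q t \<le> \<alpha> * manh p1 t + \<beta> * manh p2 t"
  shows "(\<alpha> + \<beta>) * manh p1 p2 \<le> \<alpha> * manh q p2 + \<beta> * manh q p1"
proof -
  define A where "A = S - {p1, p2}"
  have "finite S" using opt unfolding optimal_town_def is_town_def by auto
  hence A: "finite A" "p1 \<notin> A" "p2 \<notin> A" "S - {p1} = insert p2 A" "S - {p2} = insert p1 A"
    using A_def p1 p2 \<open>p1 \<noteq> p2\<close> by auto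
  have ex1: "manh p1 p2 + (\<Sum>t\<in>A. manh p1 t) \<le> manh q p2 + (\<Sum>t\<in>A. manh q t)"
    using optimal_town_exchange[OF opt p1 q] A by simp
  have ex2: "manh p1 p2 + (\<Sum>t\<in>A. manh p2 t) \<le> manh q p1 + (\<Sum>t\<in>A. manh q t)"
    using optimal_town_exchange[OF opt p2 q] A by (simp add: manh_sym)
  have "(\<alpha> + \<beta>) * (\<Sum>t\<in>A. manh q t) \<le> \<alpha> * (\<Sum>t\<in>A. manh p1 t) + \<beta> * (\<Sum>t\<in>A. manh p2 t)"
    using dominated by (simp add: sum_distrib_left sum.distrib[symmetric] sum_mono)
  moreover have "\<alpha> * (manh p1 p2 + (\<Sum>t\<in>A. manh p1 t)) \<le> \<alpha> * (manh q p2 + (\<Sum>t\<in>A. manh q t))"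
    using ex1 \<open>\<alpha> > 0\<close> by simp
  moreover have "\<beta> * (manh p1 p2 + (\<Sum>t\<in>A. manh p2 t)) \<le> \<beta> * (manh q p1 + (\<Sum>t\<in>A. manh q t))"
    using ex2 \<open>\<beta> > 0\<close> by simp
  ultimately show ?thesis by (simp add: algebra_simps)
qed

lemma abs_convex_combination_le:
  fixes k m x a b u :: int
  assumes "k * x = (k - m) * a + m * b" "0 \<le> m" "m \<le> k"
  shows "k * \<bar>x - u\<bar> \<le> (k - m) * \<bar>a - u\<bar> + m * \<bar>b - u\<bar>"
proof -
  have "k * (x - u) = (k - m) * (a - u) + m * (b - u)" using assms(1) by (simp add: algebra_simps)
  hence "\<bar>k * (x - u)\<bar> \<le> \<bar>(k - m) * (a - u)\<bar> + \<bar>m * (b - u)\<bar>" by (metis abs_triangle_ineq)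
  thus ?thesis using assms by (simp add: abs_mult)
qed

lemma abs_convex_combination_dist:
  fixes k m x a b :: int
  assumes "k * x = (k - m) * a + m * b" "0 \<le> m" "m \<le> k"
  shows "k * \<bar>x - a\<bar> = m * \<bar>a - b\<bar>" and "k * \<bar>x - b\<bar> = (k - m) * \<bar>a - b\<bar>"
proof -
  have "k * (x - a) = m * (b - a)" "k * (x - b) = (k - m) * (a - b)"
    using assms(1) by (simp_all add: algebra_simps)
  hence "\<bar>k\<bar> * \<bar>x - a\<bar> = \<bar>m\<bar> * \<bar>b - a\<bar>" "\<bar>k\<bar> * \<bar>x - b\<bar> = \<bar>k - m\<bar> * \<bar>a - b\<bar>"
    by (metis abs_mult)+
  thus "k * \<bar>x - a\<bar> = m * \<bar>a - b\<bar>" "k * \<bar>x - b\<bar> = (k - m) * \<bar>a - b\<bar>"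
    using assms(2,3) by (simp_all add: abs_minus_commute)
qed

lemma optimal_town_segment_closed:
  assumes opt: "optimal_town n S" and p1: "(a1, a2) \<in> S" and p2: "(b1, b2) \<in> S"
    and x: "k * x = (k - m) * a1 + m * b1" and y: "k * y = (k - m) * a2 + m * b2"
    and "0 < m" "m < k"
  shows "(x, y) \<in> S"
proof (rule ccontr)
  assume q: "(x, y) \<notin> S"
  let ?d = "manh (a1, a2) (b1, b2)"
  have "(a1, a2) \<noteq> (b1, b2)"
  proof
    assume "(a1, a2) = (b1, b2)"
    hence "k * x = k * a1" "k * y = k * a2" using x y by (simp_all add: algebra_simps)
    hence "(x, y) = (a1, a2)" using \<open>m < k\<close> \<open>0 < m\<close> by simp
    thus False using q p1 by simp
  qed
  hence "0 < ?d" unfolding manh_def by auto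
  have "k * manh (x, y) (a1, a2) = m * ?d" "k * manh (x, y) (b1, b2) = (k - m) * ?d"
    using abs_convex_combination_dist[OF x] abs_convex_combination_dist[OF y] \<open>0 < m\<close> \<open>m < k\<close>
    unfolding manh_def by (simp_all add: distrib_left)
  hence "k * (k - m) * manh (x, y) (b1, b2) + k * m * manh (x, y) (a1, a2)
      = (k - m) * ((k - m) * ?d) + m * (m * ?d)"
    by (metis mult.assoc mult.commute)
  also have "\<dots> = ((k - m)\<^sup>2 + m\<^sup>2) * ?d"
    by (simp add: power2_eq_square algebra_simps)
  also have "\<dots> < k * k * ?d"
    using \<open>0 < ?d\<close> \<open>0 < m\<close> \<open>m < k\<close> by (simp add: power2_eq_square algebra_simps)
  finally have "k * ((k - m) * manh (x, y) (b1, b2) + m * manh (x, y) (a1, a2)) < k * (k * ?d)"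
    by (simp add: algebra_simps)
  hence strict: "(k - m + m) * ?d > (k - m) * manh (x, y) (b1, b2) + m * manh (x, y) (a1, a2)"
    using \<open>0 < m\<close> \<open>m < k\<close> by (simp add: mult_less_cancel_left)
  have "(k - m + m) * manh (x, y) t \<le> (k - m) * manh (a1, a2) t + m * manh (b1, b2) t" for t
    using abs_convex_combination_le[OF x, of "fst t"] abs_convex_combination_le[OF y, of "snd t"]
      \<open>0 < m\<close> \<open>m < k\<close> unfolding manh_def by (simp add: algebra_simps)
  from optimal_town_weighted_exchange[OF opt p1 p2 \<open>(a1, a2) \<noteq> (b1, b2)\<close> q _ _ this] strict
    \<open>0 < m\<close> \<open>m < k\<close> show False by simp
qed

lemma optimal_town_row_interval:
  assumes opt: "optimal_town n S" and "(a, y) \<in> S" "(b, y) \<in> S" "a \<le> x" "x \<le> b"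
  shows "(x, y) \<in> S"
proof (cases "x = a \<or> x = b")
  case False
  hence "a < x" "x < b" using assms by auto
  show ?thesis
    by (rule optimal_town_segment_closed[OF opt assms(2,3), of "b - a" x "x - a" y])
      (use \<open>a < x\<close> \<open>x < b\<close> in \<open>auto simp: algebra_simps\<close>)
qed (use assms in auto)

lemma optimal_town_col_interval:
  assumes opt: "optimal_town n S" and "(x, a) \<in> S" "(x, b) \<in> S" "a \<le> y" "y \<le> b"
  shows "(x, y) \<in> S"
proof (cases "y = a \<or> y = b")
  case False
  hence "a < y" "y < b" using assms by auto
  show ?thesis
    by (rule optimal_town_segment_closed[OF opt assms(2,3), of "b - a" x "y - a" y])
      (use \<open>a < y\<close> \<open>y < b\<close> in \<open>auto simp: algebra_simps\<close>)
qed (use assms in auto)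

lemma normalized_row_extremes:
  assumes "finite S" and "normalized S" and "(i, y) \<in> S"
  obtains lo hi where "(lo, y) \<in> S" "(hi, y) \<in> S" "lo \<le> i" "i \<le> hi" "lo + hi \<in> {-1, 0}"
proof -
  define F where "F = fst ` row S y"
  have "row S y \<noteq> {}" using assms(3) unfolding row_def by auto
  hence "row_center S y = 0 \<or> row_center S y = -1/2"
    using assms(2) unfolding normalized_def by blast
  hence "Min F + Max F \<in> {-1, 0}" unfolding row_center_def F_def by auto
  moreover have "finite F" "i \<in> F" using assms(1,3) unfolding F_def row_def by force+
  hence "Min F \<in> F" "Max F \<in> F" "Min F \<le> i" "i \<le> Max F" by (auto intro: Min_in Max_in)
  moreover have "(Min F, y) \<in> S" "(Max F, y) \<in> S"
    using \<open>Min F \<in> F\<close> \<open>Max F \<in> F\<close> unfolding F_def row_def by auto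
  ultimately show thesis using that by blast
qed

lemma optimal_normalized_row_through:
  assumes opt: "optimal_town n S" and "normalized S" and "(i, y) \<in> S"
    and "-\<bar>i\<bar> \<le> x" "x \<le> \<bar>i\<bar> - (if i < 0 then 1 else 0)"
  shows "(x, y) \<in> S"
proof -
  have "finite S" using opt unfolding optimal_town_def is_town_def by auto
  then obtain lo hi where "(lo, y) \<in> S" "(hi, y) \<in> S" "lo \<le> i" "i \<le> hi" "lo + hi \<in> {-1, 0}"
    using normalized_row_extremes assms(2,3) by blast
  moreover have "lo \<le> x" "x \<le> hi" using calculation(3-5) assms(4,5) by (auto split: if_splits)
  ultimately show ?thesis using optimal_town_row_interval[OF opt] by blast
qed

theorem lemma6:
  fixes n :: nat and S :: "point set"
  assumes "optimal_town n S" and "normalized S"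
  shows "(\<forall>i::int. i \<ge> 0 \<and> col S i \<noteq> {} \<and> (i, cplus S i) \<in> S \<and> (i, cminus S i) \<in> S \<longrightarrow>
            (\<forall>x y. -i \<le> x \<and> x \<le> i \<and> cminus S i \<le> y \<and> y \<le> cplus S i \<longrightarrow> (x, y) \<in> S))
       \<and> (\<forall>i::int. i \<ge> 1 \<and> col S (-i) \<noteq> {} \<and> (-i, cplus S (-i)) \<in> S \<and> (-i, cminus S (-i)) \<in> S \<longrightarrow>
            (\<forall>x y. -i \<le> x \<and> x \<le> i - 1 \<and> cminus S (-i) \<le> y \<and> y \<le> cplus S (-i) \<longrightarrow> (x, y) \<in> S))"
proof -
  have row_through: "(x, y) \<in> S"
    if "(j, cminus S j) \<in> S" "(j, cplus S j) \<in> S" "cminus S j \<le> y" "y \<le> cplus S j"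
      and "-\<bar>j\<bar> \<le> x" "x \<le> \<bar>j\<bar> - (if j < 0 then 1 else 0)" for j x y
  proof -
    have "(j, y) \<in> S" using optimal_town_col_interval[OF assms(1)] that(1-4) by blast
    thus ?thesis using optimal_normalized_row_through[OF assms] that(5,6) by blast
  qed
  show ?thesis
  proof (intro conjI allI impI)
    fix i x y
    assume "0 \<le> i \<and> col S i \<noteq> {} \<and> (i, cplus S i) \<in> S \<and> (i, cminus S i) \<in> S"
      and "-i \<le> x \<and> x \<le> i \<and> cminus S i \<le> y \<and> y \<le> cplus S i"
    thus "(x, y) \<in> S" using row_through[of i y x] by auto
  next
    fix i x y
    assume "1 \<le> i \<and> col S (-i) \<noteq> {} \<and> (-i, cplus S (-i)) \<in> S \<and> (-i, cminus S (-i)) \<in> S"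
      and "-i \<le> x \<and> x \<le> i - 1 \<and> cminus S (-i) \<le> y \<and> y \<le> cplus S (-i)"
    thus "(x, y) \<in> S" using row_through[of "-i" y x] by auto
  qed
qed

end
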